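(* Consider an ontological model with a finite set of ontic states $\Lambda=\{\lambda_1,\lambda_2,\dots\}$ reproducing the statistics of preparations $P_1,\dots,P_n$ and a set of binary measurements. Associate to each preparation the vector $\vec\mu_i=(\mu(\lambda_1|P_i),\mu(\lambda_2|P_i),\dots)$, and let $k$ be the affine dimension of $\{\vec\mu_i\}_{i=1}^n$. If the model is preparation noncontextual, then any tomographically complete set of (binary) measurements contains at least $k$ measurements.
   Context: Prepare-and-measure scenario: preparations $P_i$ and binary measurements $M$ (outcomes $\{0,1\}$) with empirical probabilities $P^e(k|P,M)$. A mixture is a probability distribution $Q$ on preparations. Two mixtures $Q,Q'$ are operationally equivalent with respect to a set of measurements $\mathcal M$ if $\sum_i Q(P_i)P^e(k|P_i,M)=\sum_i Q'(P_i)P^e(k|P_i,M)$ for all $M\in\mathcal M$ and $k$. A set $\mathcal M_C$ is tomographically complete if the statistics of every measurement are linear functions of the statistics of the measurements in $\mathcal M_C$ (the same functions for all preparations); operational equivalence is judged with respect to a tomographically complete set. An ontological model consists of ontic states $\Lambda$, distributions $\mu(\lambda|P)$ and response functions $P^t(k|\lambda,M)$ with $P^e(k|P,M)=\sum_\lambda\mu(\lambda|P)P^t(k|\lambda,M)$. It is preparation noncontextual if operationally equivalent mixtures $Q,Q'$ satisfy $\sum_i Q(P_i)\mu(\lambda|P_i)=\sum_i Q'(P_i)\mu(\lambda|P_i)$ for all $\lambda$. *)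

theory Defs
  imports "HOL-Analysis.Analysis"
begin

text \<open>Preparations are indexed by 0..<n; ontic states form a finite type 'l;
  mu i is the vector (mu(lambda|P_i))_lambda; R M k l is the response function
  P^t(k|lambda,M) for outcome k in {0,1}.\<close>

definition ontological_model ::
  "nat \<Rightarrow> (nat \<Rightarrow> real^'l::finite) \<Rightarrow> ('m \<Rightarrow> nat \<Rightarrow> 'l \<Rightarrow> real) \<Rightarrow> 'm set \<Rightarrow> bool" where
  "ontological_model n mu R Meas \<longleftrightarrow>
     (\<forall>i<n. (\<forall>l. mu i $ l \<ge> 0) \<and> (\<Sum>l\<in>UNIV. mu i $ l) = 1) \<and>
     (\<forall>M\<in>Meas. \<forall>l. R M 0 l \<ge> 0 \<and> R M 1 l \<ge> 0 \<and> R M 0 l + R M 1 l = 1)"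

definition pe :: "(nat \<Rightarrow> real^'l::finite) \<Rightarrow> ('m \<Rightarrow> nat \<Rightarrow> 'l \<Rightarrow> real) \<Rightarrow> nat \<Rightarrow> 'm \<Rightarrow> nat \<Rightarrow> real" where
  "pe mu R i M k = (\<Sum>l\<in>UNIV. mu i $ l * R M k l)"

definition mixture :: "nat \<Rightarrow> (nat \<Rightarrow> real) \<Rightarrow> bool" where
  "mixture n Q \<longleftrightarrow> (\<forall>i<n. Q i \<ge> 0) \<and> (\<Sum>i<n. Q i) = 1"

definition op_equiv ::
  "nat \<Rightarrow> 'm set \<Rightarrow> (nat \<Rightarrow> 'm \<Rightarrow> nat \<Rightarrow> real) \<Rightarrow> (nat \<Rightarrow> real) \<Rightarrow> (nat \<Rightarrow> real) \<Rightarrow> bool" where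
  "op_equiv n Ms stat Q Q' \<longleftrightarrow>
     (\<forall>M\<in>Ms. \<forall>k\<in>{0,1}. (\<Sum>i<n. Q i * stat i M k) = (\<Sum>i<n. Q' i * stat i M k))"

definition tomo_complete ::
  "nat \<Rightarrow> 'm set \<Rightarrow> (nat \<Rightarrow> 'm \<Rightarrow> nat \<Rightarrow> real) \<Rightarrow> 'm set \<Rightarrow> bool" where
  "tomo_complete n Meas stat MC \<longleftrightarrow> MC \<subseteq> Meas \<and>
     (\<forall>M\<in>Meas. \<forall>k\<in>{0,1}. \<exists>F c. finite F \<and> F \<subseteq> MC \<and>
        (\<forall>i<n. stat i M k = (\<Sum>M'\<in>F. \<Sum>k'\<in>{0,1}. c M' k' * stat i M' k')))"

text \<open>Preparation noncontextuality; operational equivalence is judged w.r.t. the whole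
  measurement set Meas (which is itself tomographically complete; all tomographically
  complete subsets induce the same equivalence).\<close>
definition prep_noncontextual ::
  "nat \<Rightarrow> (nat \<Rightarrow> real^'l::finite) \<Rightarrow> ('m \<Rightarrow> nat \<Rightarrow> 'l \<Rightarrow> real) \<Rightarrow> 'm set \<Rightarrow> bool" where
  "prep_noncontextual n mu R Meas \<longleftrightarrow>
     (\<forall>Q Q'. mixture n Q \<longrightarrow> mixture n Q' \<longrightarrow> op_equiv n Meas (pe mu R) Q Q' \<longrightarrow>
        (\<forall>l. (\<Sum>i<n. Q i * mu i $ l) = (\<Sum>i<n. Q' i * mu i $ l)))"

end

theory Submission
  imports Defs
begin

text \<open>A zero-sum combination of the vectors \<open>\<mu>\<^sub>i\<close> is a scaled difference of two mixtures. If it is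
  orthogonal to the outcome-0 response vectors of the tomographically complete set \<open>MC\<close>, the two
  mixtures are operationally equivalent (outcome 1 is determined by outcome 0), so preparation
  noncontextuality forces it to vanish. Hence the direction space of the affine hull of the
  \<open>\<mu>\<^sub>i\<close> meets the orthogonal complement of these \<open>|MC|\<close> vectors only in 0, and its dimension,
  the affine dimension, is at most \<open>|MC|\<close>.\<close>

lemma dim_le_card_if_orthogonal_imp_zero:
  fixes V W :: "'a::euclidean_space set"
  assumes V: "subspace V" and W: "finite W"
    and orth: "\<And>x. x \<in> V \<Longrightarrow> (\<forall>w\<in>W. x \<bullet> w = 0) \<Longrightarrow> x = 0"
  shows "dim V \<le> card W"
proof -
  define f where "f v = (\<Sum>w\<in>W. (v \<bullet> w) *\<^sub>R w)" for v
  have lin: "linear f"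
    by (rule linearI) (simp_all add: f_def inner_add_left scaleR_add_left sum.distrib scaleR_sum_right)
  have "inj_on f V"
    unfolding linear_injective_on_subspace_0[OF lin V]
  proof (intro ballI impI)
    fix x assume "x \<in> V" "f x = 0"
    have "x \<bullet> f x = (\<Sum>w\<in>W. (x \<bullet> w)\<^sup>2)"
      by (simp add: f_def inner_sum_right power2_eq_square)
    with \<open>f x = 0\<close> have "(\<Sum>w\<in>W. (x \<bullet> w)\<^sup>2) = 0"
      by simp
    then have "\<forall>w\<in>W. x \<bullet> w = 0"
      using W by (simp add: sum_nonneg_eq_0_iff)
    with \<open>x \<in> V\<close> show "x = 0" by (rule orth)
  qed
  moreover have "span V = V"
    using V by (rule span_eq_iff[THEN iffD2])
  ultimately have "dim V = dim (f ` V)"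
    by (metis dim_image_eq[OF lin])
  also have "\<dots> \<le> card W"
    using W unfolding f_def
    by (intro dim_le_card image_subsetI span_sum span_mul span_base) auto
  finally show ?thesis .
qed

definition zero_sum_span :: "nat \<Rightarrow> (nat \<Rightarrow> 'a::real_vector) \<Rightarrow> 'a set" where
  "zero_sum_span n x = {(\<Sum>i<n. b i *\<^sub>R x i) | b. (\<Sum>i<n. b i) = 0}"

lemma zero_sum_span_memI:
  "(\<Sum>i<n. b i) = 0 \<Longrightarrow> (\<Sum>i<n. b i *\<^sub>R x i) \<in> zero_sum_span n x"
  unfolding zero_sum_span_def by blast

lemma subspace_zero_sum_span: "subspace (zero_sum_span n x)"
  unfolding subspace_def
proof (intro conjI ballI allI)
  show "0 \<in> zero_sum_span n x"
    using zero_sum_span_memI[of "\<lambda>_. 0" n x] by simp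
next
  fix u v assume "u \<in> zero_sum_span n x" "v \<in> zero_sum_span n x"
  then obtain a b where "u = (\<Sum>i<n. a i *\<^sub>R x i)" "(\<Sum>i<n. a i) = 0"
    and "v = (\<Sum>i<n. b i *\<^sub>R x i)" "(\<Sum>i<n. b i) = 0"
    unfolding zero_sum_span_def by blast
  then show "u + v \<in> zero_sum_span n x"
    using zero_sum_span_memI[of "\<lambda>i. a i + b i" n x]
    by (simp add: sum.distrib scaleR_add_left)
next
  fix c u assume "u \<in> zero_sum_span n x"
  then obtain a where "u = (\<Sum>i<n. a i *\<^sub>R x i)" "(\<Sum>i<n. a i) = 0"
    unfolding zero_sum_span_def by blast
  then show "c *\<^sub>R u \<in> zero_sum_span n x"
    using zero_sum_span_memI[of "\<lambda>i. c * a i" n x]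
    by (simp add: scaleR_sum_right flip: sum_distrib_left)
qed

lemma diff_in_zero_sum_span:
  assumes "i < n" "j < n"
  shows "x i - x j \<in> zero_sum_span n x"
proof -
  define b where "b k = (if k = i then 1 else 0) - (if k = j then 1 else 0 :: real)" for k
  have "b k *\<^sub>R x k = (if k = i then x k else 0) - (if k = j then x k else 0)" for k
    by (simp add: b_def scaleR_diff_left)
  then have "(\<Sum>k<n. b k *\<^sub>R x k) = x i - x j"
    using assms by (simp add: sum_subtractf)
  moreover have "(\<Sum>k<n. b k) = 0"
    using assms by (simp add: b_def sum_subtractf)
  ultimately show ?thesis
    using zero_sum_span_memI[of b n x] by simp
qed

lemma aff_dim_le_dim_zero_sum_span:
  fixes x :: "nat \<Rightarrow> 'a::euclidean_space"
  shows "aff_dim (x ` {..<n}) \<le> int (dim (zero_sum_span n x))"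
proof (cases "n = 0")
  case False
  then have "aff_dim (x ` {..<n}) = int (dim ((\<lambda>y. y - x 0) ` x ` {..<n}))"
    by (intro aff_dim_eq_dim_subtract) (auto intro: hull_inc)
  also have "\<dots> \<le> int (dim (zero_sum_span n x))"
    using False by (auto intro!: dim_subset diff_in_zero_sum_span)
  finally show ?thesis .
qed simp

lemma zero_sum_eq_scaled_mixture_diff:
  fixes b :: "nat \<Rightarrow> real"
  assumes sum0: "(\<Sum>i<n. b i) = 0" and nonzero: "\<exists>i<n. b i \<noteq> 0"
  obtains s Q Q' where "s > 0" "mixture n Q" "mixture n Q'" "\<And>i. b i = s * (Q i - Q' i)"
proof -
  define p where "p i = max (b i) 0" for i
  define q where "q i = max (- b i) 0" for i
  define s where "s = (\<Sum>i<n. p i)"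
  have b_pq: "b i = p i - q i" for i
    by (simp add: p_def q_def)
  have pq_nonneg: "p i \<ge> 0" "q i \<ge> 0" for i
    by (auto simp: p_def q_def)
  have sum_q: "(\<Sum>i<n. q i) = s"
    using sum0 unfolding s_def b_pq by (simp add: sum_subtractf)
  have "s \<noteq> 0"
  proof
    assume "s = 0"
    then have "\<forall>i<n. p i = 0 \<and> q i = 0"
      using sum_q unfolding s_def by (simp add: sum_nonneg_eq_0_iff pq_nonneg)
    with nonzero show False by (auto simp: b_pq)
  qed
  then have "s > 0"
    unfolding s_def using pq_nonneg by (simp add: sum_nonneg order_neq_le_trans)
  show thesis
  proof
    show "s > 0" by fact
    show "mixture n (\<lambda>i. p i / s)" "mixture n (\<lambda>i. q i / s)"
      unfolding mixture_def using \<open>s > 0\<close> pq_nonneg sum_q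
      by (simp_all add: sum_divide_distrib[symmetric] s_def)
    show "b i = s * (p i / s - q i / s)" for i
      using \<open>s > 0\<close> by (simp add: b_pq right_diff_distrib)
  qed
qed

lemma op_equiv_if_tomo_complete:
  assumes tc: "tomo_complete n Meas stat MC" and eq: "op_equiv n MC stat Q Q'"
  shows "op_equiv n Meas stat Q Q'"
  unfolding op_equiv_def
proof (intro ballI)
  fix M k assume "M \<in> Meas" "k \<in> {0::nat, 1}"
  then obtain F c where F: "F \<subseteq> MC"
    and lin: "\<And>i. i < n \<Longrightarrow> stat i M k = (\<Sum>M'\<in>F. \<Sum>k'\<in>{0,1}. c M' k' * stat i M' k')"
    using tc unfolding tomo_complete_def by blast
  have weighted: "(\<Sum>i<n. X i * stat i M k)
      = (\<Sum>M'\<in>F. \<Sum>k'\<in>{0,1}. c M' k' * (\<Sum>i<n. X i * stat i M' k'))" for X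
  proof -
    have "(\<Sum>i<n. X i * stat i M k) = (\<Sum>i<n. \<Sum>M'\<in>F. \<Sum>k'\<in>{0,1}. c M' k' * (X i * stat i M' k'))"
      by (intro sum.cong refl) (simp add: lin sum_distrib_left distrib_left mult.left_commute)
    also have "\<dots> = (\<Sum>M'\<in>F. \<Sum>k'\<in>{0,1}. c M' k' * (\<Sum>i<n. X i * stat i M' k'))"
      by (subst sum.swap) (simp add: sum.swap[of _ "{..<n}"] sum_distrib_left)
    finally show ?thesis .
  qed
  show "(\<Sum>i<n. Q i * stat i M k) = (\<Sum>i<n. Q' i * stat i M k)"
    unfolding weighted using eq F unfolding op_equiv_def by (intro sum.cong refl) auto
qed

lemma pe_outcome0_eq_inner: "pe mu R i M 0 = mu i \<bullet> (\<chi> l. R M 0 l)"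
  by (simp add: pe_def inner_vec_def)

lemma sum_pe_outcome0:
  "(\<Sum>i<n. Q i * pe mu R i M 0) = (\<Sum>i<n. Q i *\<^sub>R mu i) \<bullet> (\<chi> l. R M 0 l)"
  by (simp add: pe_outcome0_eq_inner inner_sum_left)

lemma sum_pe_outcome1:
  assumes om: "ontological_model n mu R Meas" and "M \<in> Meas" and Q: "mixture n Q"
  shows "(\<Sum>i<n. Q i * pe mu R i M 1) = 1 - (\<Sum>i<n. Q i * pe mu R i M 0)"
proof -
  have "R M 1 l = 1 - R M 0 l" for l
    using om \<open>M \<in> Meas\<close> unfolding ontological_model_def by (simp add: eq_diff_eq add.commute)
  then have "pe mu R i M 1 = (\<Sum>l\<in>UNIV. mu i $ l) - pe mu R i M 0" for i
    by (simp add: pe_def right_diff_distrib sum_subtractf)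
  then have "pe mu R i M 1 = 1 - pe mu R i M 0" if "i < n" for i
    using om that unfolding ontological_model_def by simp
  then have "(\<Sum>i<n. Q i * pe mu R i M 1) = (\<Sum>i<n. Q i) - (\<Sum>i<n. Q i * pe mu R i M 0)"
    by (simp add: right_diff_distrib sum_subtractf)
  with Q show ?thesis
    unfolding mixture_def by simp
qed

lemma noncontextual_mixtures_eq_if_orthogonal:
  assumes om: "ontological_model n mu R Meas"
    and nc: "prep_noncontextual n mu R Meas"
    and tc: "tomo_complete n Meas (pe mu R) MC"
    and Q: "mixture n Q" and Q': "mixture n Q'"
    and orth: "\<forall>M\<in>MC. ((\<Sum>i<n. Q i *\<^sub>R mu i) - (\<Sum>i<n. Q' i *\<^sub>R mu i)) \<bullet> (\<chi> l. R M 0 l) = 0"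
  shows "(\<Sum>i<n. Q i *\<^sub>R mu i) = (\<Sum>i<n. Q' i *\<^sub>R mu i)"
proof -
  have MC: "MC \<subseteq> Meas"
    using tc unfolding tomo_complete_def by simp
  have outcome0: "(\<Sum>i<n. Q i * pe mu R i M 0) = (\<Sum>i<n. Q' i * pe mu R i M 0)" if "M \<in> MC" for M
    using orth that by (simp add: sum_pe_outcome0 inner_diff_left)
  have "op_equiv n MC (pe mu R) Q Q'"
    unfolding op_equiv_def
    using outcome0 sum_pe_outcome1[OF om _ Q] sum_pe_outcome1[OF om _ Q'] MC by auto
  then have "op_equiv n Meas (pe mu R) Q Q'"
    by (rule op_equiv_if_tomo_complete[OF tc])
  with nc Q Q' show ?thesis
    unfolding prep_noncontextual_def by (simp add: vec_eq_iff sum_component)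
qed

lemma noncontextual_zero_sum_orthogonal_imp_zero:
  assumes om: "ontological_model n mu R Meas"
    and nc: "prep_noncontextual n mu R Meas"
    and tc: "tomo_complete n Meas (pe mu R) MC"
    and x: "x \<in> zero_sum_span n mu"
    and orth: "\<forall>M\<in>MC. x \<bullet> (\<chi> l. R M 0 l) = 0"
  shows "x = 0"
proof -
  obtain b where x_b: "x = (\<Sum>i<n. b i *\<^sub>R mu i)" and sum0: "(\<Sum>i<n. b i) = 0"
    using x unfolding zero_sum_span_def by blast
  show ?thesis
  proof (cases "\<exists>i<n. b i \<noteq> 0")
    case True
    then obtain s Q Q' where "s > 0" "mixture n Q" "mixture n Q'"
      and b: "\<And>i. b i = s * (Q i - Q' i)"
      using zero_sum_eq_scaled_mixture_diff[OF sum0] by blast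
    have x_QQ': "x = s *\<^sub>R ((\<Sum>i<n. Q i *\<^sub>R mu i) - (\<Sum>i<n. Q' i *\<^sub>R mu i))"
      by (simp add: x_b b scaleR_sum_right sum_subtractf[symmetric] algebra_simps)
    have "(\<Sum>i<n. Q i *\<^sub>R mu i) = (\<Sum>i<n. Q' i *\<^sub>R mu i)"
      using orth \<open>s > 0\<close> unfolding x_QQ'
      by (intro noncontextual_mixtures_eq_if_orthogonal[OF om nc tc \<open>mixture n Q\<close> \<open>mixture n Q'\<close>])
        simp
    then show ?thesis
      by (simp add: x_QQ')
  qed (simp add: x_b)
qed

theorem lemma3:
  fixes n :: nat
    and mu :: "nat \<Rightarrow> real^'l::finite"
    and R :: "'m \<Rightarrow> nat \<Rightarrow> 'l \<Rightarrow> real"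
    and Meas MC :: "'m set"
  assumes "ontological_model n mu R Meas"
    and "prep_noncontextual n mu R Meas"
    and "tomo_complete n Meas (pe mu R) MC"
  shows "infinite MC \<or> aff_dim (mu ` {..<n}) \<le> int (card MC)"
proof (cases "finite MC")
  case fin: True
  have "dim (zero_sum_span n mu) \<le> card ((\<lambda>M. \<chi> l. R M 0 l) ` MC)"
    using fin noncontextual_zero_sum_orthogonal_imp_zero[OF assms]
    by (intro dim_le_card_if_orthogonal_imp_zero subspace_zero_sum_span) auto
  also have "\<dots> \<le> card MC"
    using fin by (rule card_image_le)
  finally show ?thesis
    using aff_dim_le_dim_zero_sum_span[of mu n] by linarith
qed simp

end
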